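(* Let $s\in\{1,2\}$. Let real sequences $\zeta(t)$ and $\phi_i(t)$ ($i\in\mathscr C_s$) satisfy, for every $t$ and every $k\in\mathscr C_s$, the update inclusions $$\zeta(t+1)-\zeta(t)\in\frac{\tau^2\eta}{2n}\sum_{i\in\mathscr C_s}\left[\zeta(t)+\phi_i(t)\right]^2+\left[-\tfrac32\eta\tau\kappa\mathcal L,\ \tfrac32\eta\tau\kappa\mathcal L\right],$$ $$\phi_k(t+1)-\phi_k(t)\in\eta\left[\frac{\kappa^2d}{4n}(|\phi_k(t)|+|\zeta(t)|)^2-\frac52\kappa\tau\mathcal L,\ \frac{3\kappa^2d}{4n}(|\phi_k(t)|+|\zeta(t)|)^2+\frac52\kappa\tau\mathcal L\right].$$ Suppose there exist constants $c^{(t)}\in\left(0,\frac{8}{1+8\mathfrak c}\right)$ and $8\le C^{(\phi)}\le n$, and $t_0\le c^{(t)}\left(\tau^2\eta|\zeta(0)|\right)^{-1}$, such that: 1. $\sqrt{\frac{32\mathcal Ln}{\mathfrak c^2\sqrt d}}\le|\zeta(0)|\le\frac{\mathfrak c(8-c^{(t)})}{16\eta\tau^2}$; 2. $|\phi_k(0)|\le\frac{\mathfrak c}{8}|\zeta(0)|$ for all $k\in\mathscr C_s$; 3. $\mathfrak c\le\min\left\{\frac14-\frac{2}{C^{(\phi)}},\frac{nC^{(\phi)}}{4},\left(\frac{n}{48}\right)^{1/3},\frac18\right\}$. Then for all $t\le t_0$ and all $k\in\mathscr C_s$: (a) if $\zeta(0)>0$, then $\left[\zeta(0)^{-1}-(\frac18-\mathfrak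 c)\eta\tau^2t\right]^{-1}\le\zeta(t)\le\left[\zeta(0)^{-1}-(\frac18+\mathfrak c)\eta\tau^2t\right]^{-1}$, while if $\zeta(0)<0$, then $\zeta(0)\le\zeta(t)\le0$; (b) $|\phi_k(t)|\le\frac{C^{(\phi)}\mathfrak c^2}{n}|\zeta(t)|+\frac{\mathfrak c}{8}|\zeta(0)|$.
   Context: Here $\tau,\kappa,\eta,\mathcal L>0$, $d,n$ positive integers with $4\mid n$, $\mathscr C_s\subseteq[n]$ has size $n/4$, and $\mathfrak c=\frac{8\kappa\sqrt d}{\tau}$. In the paper, $\zeta(t)=\zeta^{(s)}(t)=\boldsymbol w_r(t)^\top\boldsymbol\mu^{(s)}$ and $\phi_k(t)=\boldsymbol w_r(t)^\top\boldsymbol\xi_k$ for a fixed neuron of a one-hidden-layer network with cubic activation $\sigma(z)=\frac13z^3$ trained by gradient descent with step size $\eta$ on Gaussian mixture data with cluster-mean norm $\tau$, noise variance $\kappa^2$, dimension $d$; $\mathcal L$ bounds $|\sigma'|$. *)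

theory Defs
  imports Complex_Main
begin

definition frakc :: "real \<Rightarrow> real \<Rightarrow> nat \<Rightarrow> real" where
  "frakc \<tau> \<kappa> d = 8 * \<kappa> * sqrt (real d) / \<tau>"

end

theory Submission
  imports Defs
begin

(* Up to additive noise of size E = eta tau kappa L, the signal obeys the Riccati-type recursion
   zeta(t+1) - zeta(t) ~ (tau^2 eta / 8) zeta(t)^2, since each of the n/4 summands (zeta + phi_i)^2
   is close to zeta^2 as long as |phi_i| is small against |zeta|.  Hence 1/zeta drops by about
   tau^2 eta / 8 per step when zeta(0) > 0, while for zeta(0) < 0 the signal climbs towards 0 with
   1/|zeta| growing by at most tau^2 eta / 3 per step.  The noise coordinates stay below the envelope
   c |zeta(0)| / 8 + (c^2/n) (zeta(t) - zeta(0)) + 3 t E: the quadratic drift of phi_k is a c^2/n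
   fraction of that of zeta, so the envelope outgrows phi_k, and in turn the envelope stays below
   |zeta(t)| / 8, which keeps the Riccati recursion valid.  The lower bound on |zeta(0)| makes E
   negligible against tau^2 eta c^3 zeta(0)^2 / n, and t <= t0 keeps both the accumulated noise and
   the blow-up time of the recursion out of reach. *)

lemma sum_square_shift_bounds:
  fixes f :: "'a \<Rightarrow> real"
  assumes "finite A" "\<And>i. i \<in> A \<Longrightarrow> \<bar>f i\<bar> \<le> r" "r \<le> \<bar>z\<bar>"
  shows "real (card A) * (\<bar>z\<bar> - r)^2 \<le> (\<Sum>i\<in>A. (z + f i)^2)"
    and "(\<Sum>i\<in>A. (z + f i)^2) \<le> real (card A) * (\<bar>z\<bar> + r)^2"
proof -
  have "(\<bar>z\<bar> - r)^2 \<le> (z + f i)^2" "(z + f i)^2 \<le> (\<bar>z\<bar> + r)^2" if "i \<in> A" for i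
  proof -
    have "\<bar>z\<bar> - r \<le> \<bar>z + f i\<bar>" "\<bar>z + f i\<bar> \<le> \<bar>z\<bar> + r"
      using assms(2)[OF that] by linarith+
    then show "(\<bar>z\<bar> - r)^2 \<le> (z + f i)^2" "(z + f i)^2 \<le> (\<bar>z\<bar> + r)^2"
      using assms(3) by (metis abs_ge_zero diff_ge_0_iff_ge power2_abs power_mono)+
  qed
  then show "real (card A) * (\<bar>z\<bar> - r)^2 \<le> (\<Sum>i\<in>A. (z + f i)^2)"
    and "(\<Sum>i\<in>A. (z + f i)^2) \<le> real (card A) * (\<bar>z\<bar> + r)^2"
    using sum_mono[of A "\<lambda>_. (\<bar>z\<bar> - r)^2"] sum_mono[of A _ "\<lambda>_. (\<bar>z\<bar> + r)^2"] by auto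
qed

lemma inverse_increment_pos:
  fixes a c z D :: real
  assumes "0 < a" "0 < c" "c \<le> 1/8" "0 < z" "a * z \<le> 2 * c"
    and "a * (1/8 - c/8) * z^2 \<le> D" "D \<le> a * (1/8 + c/2) * z^2"
  shows "inverse z - a * (1/8 + c/2) \<le> inverse (z + D)"
    and "inverse (z + D) \<le> inverse z - a * (1/8 - c)"
proof -
  have "0 \<le> a * (1/8 - c/8) * z^2" using assms by simp
  then have D0: "0 \<le> D" using assms(6) by linarith
  have zD: "0 < z + D" using assms(4) D0 by linarith
  have diff: "inverse z - inverse (z + D) = D / (z * (z + D))"
    using zD assms(4) by (simp add: field_simps)
  have "D / (z * (z + D)) \<le> D / (z * z)"
    using zD assms(4) D0 by (intro divide_left_mono mult_left_mono) auto
  also have "\<dots> \<le> a * (1/8 + c/2)"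
    using assms(4,7) by (simp add: pos_divide_le_eq power2_eq_square)
  finally show "inverse z - a * (1/8 + c/2) \<le> inverse (z + D)" using diff by linarith
  have "a * (1/8 - c) * (z * (z + D)) = (1/8 - c) * (a * z^2) + (1/8 - c) * (a * z) * D"
    by (simp add: algebra_simps power2_eq_square)
  also have "(1/8 - c) * (a * z) * D \<le> c/4 * D"
    using mult_mono[of "1/8 - c" "1/8" "a * z" "2 * c"] assms D0
    by (intro mult_right_mono) auto
  also have "(1/8 - c) * (a * z^2) \<le> ((1 - c/4) * (1/8 - c/8)) * (a * z^2)"
    using assms(1-3) by (intro mult_right_mono) (auto simp: algebra_simps)
  also have "\<dots> = (1 - c/4) * (a * (1/8 - c/8) * z^2)" by simp
  also have "\<dots> \<le> (1 - c/4) * D" using assms by (intro mult_left_mono) auto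
  finally have "a * (1/8 - c) * (z * (z + D)) \<le> D" by (simp add: algebra_simps)
  then have "a * (1/8 - c) \<le> D / (z * (z + D))"
    using zD assms(4) by (simp add: pos_le_divide_eq)
  then show "inverse (z + D) \<le> inverse z - a * (1/8 - c)" using diff by linarith
qed

lemma inverse_increment_neg:
  fixes a w D :: real
  assumes "0 < a" "0 < w" "a * w \<le> 1/16" "a * w^2 / 16 \<le> D" "D \<le> a * w^2 / 4"
  shows "0 < w - D" "0 \<le> D" "inverse (w - D) \<le> inverse w + a/3"
proof -
  have "0 \<le> a * w^2 / 16" using assms(1) by simp
  then show D0: "0 \<le> D" using assms(4) by linarith
  have "a * w^2 / 4 = (a * w) * w / 4" by (simp add: power2_eq_square)
  also have "\<dots> \<le> w / 64" using assms(2,3) by (simp add: mult_right_mono)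
  finally show wD: "0 < w - D" using assms(2,5) by linarith
  have diff: "inverse (w - D) - inverse w = D / (w * (w - D))"
    using wD assms(2) by (simp add: field_simps)
  have "(a * w) / 3 * D \<le> (1/48) * D" using assms(3) D0 by (intro mult_right_mono) auto
  moreover have "a/3 * (w * (w - D)) = a * w^2 / 3 - (a * w) / 3 * D"
    by (simp add: algebra_simps power2_eq_square)
  ultimately have "D \<le> a/3 * (w * (w - D))" using assms(5) D0 by linarith
  then have "D / (w * (w - D)) \<le> a/3" using wD assms(2) by (simp add: divide_le_eq)
  then show "inverse (w - D) \<le> inverse w + a/3" using diff by linarith
qed

(* The dynamics with normalised constants: a = tau^2 eta, E = eta tau kappa L, nn = n and A = C_s;
   the coefficient a c^2 / (256 nn) of the phi update is eta kappa^2 d / (4 n) since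
   c = 8 kappa sqrt d / tau. *)
locale signal_noise_dynamics =
  fixes a E c nn ct :: real and t0 :: nat and A :: "nat set"
    and \<zeta> :: "nat \<Rightarrow> real" and \<phi> :: "nat \<Rightarrow> nat \<Rightarrow> real"
  assumes a_pos: "0 < a" and E_nonneg: "0 \<le> E"
    and c_pos: "0 < c" and c_le: "c \<le> 1/8"
    and nn_ge: "4 \<le> nn" and finite_A: "finite A" and card_A: "real (card A) = nn / 4"
    and zeta_step: "\<And>t. \<zeta> (Suc t) - \<zeta> t \<in>
        {a / (2 * nn) * (\<Sum>i\<in>A. (\<zeta> t + \<phi> i t)^2) - 3/2 * E ..
         a / (2 * nn) * (\<Sum>i\<in>A. (\<zeta> t + \<phi> i t)^2) + 3/2 * E}"
    and phi_step: "\<And>t k. k \<in> A \<Longrightarrow> \<phi> k (Suc t) - \<phi> k t \<in>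
        {a * c^2 / (256 * nn) * (\<bar>\<phi> k t\<bar> + \<bar>\<zeta> t\<bar>)^2 - 5/2 * E ..
         3 * (a * c^2 / (256 * nn)) * (\<bar>\<phi> k t\<bar> + \<bar>\<zeta> t\<bar>)^2 + 5/2 * E}"
    and zeta0_nonzero: "\<zeta> 0 \<noteq> 0"
    and noise_small: "256 * nn * E \<le> a * \<zeta> 0 ^ 2 * c^3"
    and horizon: "a * \<bar>\<zeta> 0\<bar> * real t0 \<le> ct"
    and ct_pos: "0 < ct" and ct_small: "ct * (1 + 8 * c) < 8"
    and zeta0_small: "a * \<bar>\<zeta> 0\<bar> \<le> c * (8 - ct) / 16"
    and phi0: "\<And>k. k \<in> A \<Longrightarrow> \<bar>\<phi> k 0\<bar> \<le> c / 8 * \<bar>\<zeta> 0\<bar>"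
begin

lemma coupling_pos: "0 < c^2 / nn"
  using c_pos nn_ge by simp

lemma coupling_le: "c^2 / nn \<le> c / 32"
proof -
  have "c^2 / nn \<le> c^2 / 4" using nn_ge c_pos by (intro divide_left_mono) auto
  also have "\<dots> \<le> c * (1/8) / 4"
    using c_pos c_le by (simp add: power2_eq_square divide_right_mono)
  finally show ?thesis by simp
qed

lemma ct_bounds: "ct + 8 * (c * ct) < 8" "ct < 8"
proof -
  show "ct + 8 * (c * ct) < 8" using ct_small by (simp add: algebra_simps)
  then show "ct < 8" using mult_pos_pos[OF c_pos ct_pos] by linarith
qed

lemma horizon_le:
  assumes "t \<le> t0"
  shows "a * \<bar>\<zeta> 0\<bar> * real t \<le> ct"
proof -
  have "a * \<bar>\<zeta> 0\<bar> * real t \<le> a * \<bar>\<zeta> 0\<bar> * real t0"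
    using assms a_pos by (intro mult_left_mono) auto
  then show ?thesis using horizon by linarith
qed

lemma accumulated_noise_le:
  assumes "t \<le> t0"
  shows "3 * real t * E \<le> c^2 / nn * \<bar>\<zeta> 0\<bar> / 80"
proof -
  have "256 * nn * (3 * real t * E) = 3 * real t * (256 * nn * E)" by simp
  also have "\<dots> \<le> 3 * real t * (a * \<zeta> 0 ^ 2 * c^3)"
    using noise_small by (intro mult_left_mono) auto
  also have "\<dots> = 3 * (a * \<bar>\<zeta> 0\<bar> * real t) * (\<bar>\<zeta> 0\<bar> * c^2 * c)"
    by (simp add: algebra_simps power2_eq_square power3_eq_cube)
  also have "\<dots> \<le> 3 * 8 * (\<bar>\<zeta> 0\<bar> * c^2 * (1/8))"
    using horizon_le[OF assms] ct_bounds(2) c_pos c_le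
    by (intro mult_mono mult_left_mono) auto
  also have "\<dots> = 256 * nn * (c^2 / nn * \<bar>\<zeta> 0\<bar> / 80) * (240 / 256)"
    using nn_ge by simp
  also have "\<dots> \<le> 256 * nn * (c^2 / nn * \<bar>\<zeta> 0\<bar> / 80)"
    using nn_ge by simp
  finally show ?thesis by (rule mult_left_le_imp_le) (use nn_ge in auto)
qed

lemma zeta_increment_bounds:
  assumes "\<And>i. i \<in> A \<Longrightarrow> \<bar>\<phi> i t\<bar> \<le> r" "r \<le> \<bar>\<zeta> t\<bar>"
  shows "a/8 * (\<bar>\<zeta> t\<bar> - r)^2 - 3/2 * E \<le> \<zeta> (Suc t) - \<zeta> t"
    and "\<zeta> (Suc t) - \<zeta> t \<le> a/8 * (\<bar>\<zeta> t\<bar> + r)^2 + 3/2 * E"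
proof -
  let ?S = "\<Sum>i\<in>A. (\<zeta> t + \<phi> i t)^2"
  have S: "nn/4 * (\<bar>\<zeta> t\<bar> - r)^2 \<le> ?S" "?S \<le> nn/4 * (\<bar>\<zeta> t\<bar> + r)^2"
    using sum_square_shift_bounds[OF finite_A assms] card_A by simp_all
  have scale: "a/8 * x = a/(2*nn) * (nn/4 * x)" for x using nn_ge by simp
  have "a/8 * (\<bar>\<zeta> t\<bar> - r)^2 \<le> a/(2*nn) * ?S" "a/(2*nn) * ?S \<le> a/8 * (\<bar>\<zeta> t\<bar> + r)^2"
    unfolding scale using S a_pos nn_ge by (intro mult_left_mono; simp)+
  then show "a/8 * (\<bar>\<zeta> t\<bar> - r)^2 - 3/2 * E \<le> \<zeta> (Suc t) - \<zeta> t"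
    and "\<zeta> (Suc t) - \<zeta> t \<le> a/8 * (\<bar>\<zeta> t\<bar> + r)^2 + 3/2 * E"
    using zeta_step[of t] unfolding atLeastAtMost_iff by linarith+
qed

definition envelope :: "nat \<Rightarrow> real" where
  "envelope t = c/8 * \<bar>\<zeta> 0\<bar> + c^2/nn * (\<zeta> t - \<zeta> 0) + 3 * real t * E"

definition enveloped :: "nat \<Rightarrow> bool" where
  "enveloped t \<longleftrightarrow> (\<forall>k\<in>A. \<bar>\<phi> k t\<bar> \<le> envelope t)"

lemma enveloped_0: "enveloped 0"
  using phi0 by (simp add: enveloped_def envelope_def)

lemma enveloped_Suc:
  assumes "enveloped t" "envelope t \<le> \<bar>\<zeta> t\<bar> / 8"
    and growth: "a * \<zeta> t ^ 2 / 16 \<le> \<zeta> (Suc t) - \<zeta> t"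
  shows "enveloped (Suc t)"
  unfolding enveloped_def
proof
  fix k assume k: "k \<in> A"
  define D where "D = \<zeta> (Suc t) - \<zeta> t"
  define X where "X = \<bar>\<phi> k t\<bar> + \<bar>\<zeta> t\<bar>"
  have phi_k: "\<bar>\<phi> k t\<bar> \<le> envelope t" using assms(1) k by (simp add: enveloped_def)
  have "X \<le> 9/8 * \<bar>\<zeta> t\<bar>" using phi_k assms(2) by (simp add: X_def)
  then have "X^2 \<le> (9/8 * \<bar>\<zeta> t\<bar>)^2" by (intro power_mono) (auto simp: X_def)
  then have "X^2 \<le> 81/64 * \<zeta> t ^ 2" by (simp add: power_divide power_mult_distrib)
  then have "3 * X^2 \<le> 16 * \<zeta> t ^ 2" using zero_le_power2[of "\<zeta> t"] by linarith
  then have "3 * a * X^2 \<le> 256 * (a * \<zeta> t ^ 2 / 16)"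
    using mult_left_mono[of _ _ a] a_pos by (simp add: algebra_simps)
  also have "\<dots> \<le> 256 * D" using growth by (simp add: D_def)
  finally have "c^2/nn * (3 * a * X^2 / 256) \<le> c^2/nn * D"
    using coupling_pos by (intro mult_left_mono) auto
  then have K: "3 * (a * c^2 / (256 * nn)) * X^2 \<le> c^2/nn * D" "0 \<le> a * c^2 / (256 * nn) * X^2"
    using a_pos nn_ge by (simp_all add: field_simps)
  have "envelope (Suc t) = envelope t + c^2/nn * D + 3 * E"
    by (simp add: envelope_def D_def algebra_simps add_divide_distrib [symmetric])
  then show "\<bar>\<phi> k (Suc t)\<bar> \<le> envelope (Suc t)"
    using phi_step[OF k, of t] phi_k E_nonneg K
    unfolding X_def[symmetric] D_def[symmetric] atLeastAtMost_iff abs_le_iff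
    by linarith
qed

lemma noise_le:
  assumes "\<bar>\<zeta> 0\<bar> \<le> z"
  shows "65536 * E \<le> a * z^2 * c"
proof -
  have "1024 * E \<le> 256 * nn * E" using nn_ge E_nonneg by (intro mult_right_mono) auto
  also have "\<dots> \<le> a * \<bar>\<zeta> 0\<bar>^2 * c^3" using noise_small by simp
  also have "\<dots> \<le> a * z^2 * c^3"
    using assms a_pos c_pos by (intro mult_right_mono mult_left_mono power_mono) auto
  also have "\<dots> = (a * z^2 * c) * c^2" by (simp add: power2_eq_square power3_eq_cube)
  also have "\<dots> \<le> (a * z^2 * c) * (1/8)^2"
    using a_pos c_pos c_le by (intro mult_left_mono power_mono) auto
  also have "\<dots> = a * z^2 * c / 64" by (simp add: power_divide)
  finally show ?thesis by linarith
qed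

definition pos_shape :: "nat \<Rightarrow> bool" where
  "pos_shape t \<longleftrightarrow> 0 < \<zeta> t
     \<and> inverse (\<zeta> 0) - (1/8 + c/2) * a * real t \<le> inverse (\<zeta> t)
     \<and> inverse (\<zeta> t) \<le> inverse (\<zeta> 0) - (1/8 - c) * a * real t"

lemma pos_shape_bounds:
  assumes pos: "0 < \<zeta> 0" and "t \<le> t0" and shape: "pos_shape t"
  shows "\<zeta> 0 \<le> \<zeta> t" "a * \<zeta> t \<le> 2 * c" "envelope t \<le> c/4 * \<zeta> t"
proof -
  have zt: "0 < \<zeta> t"
    and lower: "inverse (\<zeta> 0) - (1/8 + c/2) * a * real t \<le> inverse (\<zeta> t)"
    and upper: "inverse (\<zeta> t) \<le> inverse (\<zeta> 0) - (1/8 - c) * a * real t"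
    using shape by (auto simp: pos_shape_def)
  have "0 \<le> (1/8 - c) * a * real t" using c_le a_pos by simp
  then have "inverse (\<zeta> t) \<le> inverse (\<zeta> 0)" using upper by linarith
  then show z0_le: "\<zeta> 0 \<le> \<zeta> t" using zt pos by simp
  define u where "u = a * \<zeta> 0 * real t"
  have u: "0 \<le> u" "u \<le> ct" using horizon_le[OF \<open>t \<le> t0\<close>] a_pos pos by (simp_all add: u_def)
  define Den where "Den = inverse (\<zeta> 0) - (1/8 + c/2) * a * real t"
  have z0_Den: "\<zeta> 0 * Den = 1 - (1/8 + c/2) * u" using pos by (simp add: Den_def u_def algebra_simps)
  have "(1/4 + c) * u \<le> (1/4 + c) * ct" using u c_pos by (intro mult_left_mono) auto
  then have "(8 - ct) / 16 \<le> 2 * (\<zeta> 0 * Den)"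
    unfolding z0_Den by (simp add: algebra_simps) (use ct_bounds in argo)
  then have "c * ((8 - ct) / 16) \<le> c * (2 * (\<zeta> 0 * Den))" using c_pos by (intro mult_left_mono) auto
  moreover have "a * \<zeta> 0 \<le> c * ((8 - ct) / 16)" using zeta0_small pos by simp
  moreover have "c * (2 * (\<zeta> 0 * Den)) = (2 * c * Den) * \<zeta> 0" by (simp add: algebra_simps)
  ultimately have "a * \<zeta> 0 \<le> (2 * c * Den) * \<zeta> 0" by linarith
  then have a_le: "a \<le> 2 * c * Den" using pos by simp
  then have "0 < 2 * c * Den" using a_pos by linarith
  then have Den_pos: "0 < Den" using c_pos by (simp add: zero_less_mult_iff)
  have "\<zeta> t \<le> inverse Den"
    using le_imp_inverse_le[OF lower[folded Den_def] Den_pos] zt by simp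
  then have "a * \<zeta> t \<le> a * inverse Den" using a_pos by (intro mult_left_mono) auto
  also have "\<dots> \<le> 2 * c" using a_le Den_pos by (simp add: field_simps)
  finally show "a * \<zeta> t \<le> 2 * c" .
  have "c^2/nn * \<zeta> t \<le> c/32 * \<zeta> t" using coupling_le zt by (intro mult_right_mono) auto
  moreover have "c * \<zeta> 0 \<le> c * \<zeta> t" using z0_le c_pos by (intro mult_left_mono) auto
  moreover have "0 < c^2/nn * \<zeta> 0" using coupling_pos pos by (rule mult_pos_pos)
  moreover have "0 < c * \<zeta> t" using c_pos zt by simp
  ultimately show "envelope t \<le> c/4 * \<zeta> t"
    using accumulated_noise_le[OF \<open>t \<le> t0\<close>]
    unfolding envelope_def abs_of_pos[OF pos] right_diff_distrib by argo
qed

lemma pos_increment_bounds: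
  assumes pos: "0 < \<zeta> 0" and z0_le: "\<zeta> 0 \<le> \<zeta> t"
    and "enveloped t" "envelope t \<le> c/4 * \<zeta> t"
  shows "a * (1/8 - c/8) * \<zeta> t ^ 2 \<le> \<zeta> (Suc t) - \<zeta> t"
    and "\<zeta> (Suc t) - \<zeta> t \<le> a * (1/8 + c/2) * \<zeta> t ^ 2"
proof -
  define P where "P = a * \<zeta> t ^ 2"
  have zt: "0 < \<zeta> t" using pos z0_le by linarith
  have P: "0 \<le> P" using a_pos by (simp add: P_def)
  have "c/4 * \<zeta> t \<le> \<bar>\<zeta> t\<bar>" using c_le zt by simp
  moreover have "\<bar>\<phi> i t\<bar> \<le> c/4 * \<zeta> t" if "i \<in> A" for i
    using assms(3,4) that by (auto simp: enveloped_def)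
  ultimately have incr:
    "a/8 * (\<bar>\<zeta> t\<bar> - c/4 * \<zeta> t)^2 - 3/2 * E \<le> \<zeta> (Suc t) - \<zeta> t"
    "\<zeta> (Suc t) - \<zeta> t \<le> a/8 * (\<bar>\<zeta> t\<bar> + c/4 * \<zeta> t)^2 + 3/2 * E"
    by (intro zeta_increment_bounds; blast)+
  have noise: "65536 * E \<le> P * c" using noise_le[of "\<zeta> t"] pos z0_le by (simp add: P_def)
  have "P/8 - P * c/16 = P/8 * (1 - c/2)" by (simp add: algebra_simps)
  also have "\<dots> \<le> P/8 * (1 - c/4)^2"
    using P by (intro mult_left_mono) (simp_all add: power2_eq_square algebra_simps)
  also have "P/8 * (1 - c/4)^2 = a/8 * (\<bar>\<zeta> t\<bar> - c/4 * \<zeta> t)^2"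
    using zt by (simp add: P_def power2_eq_square algebra_simps)
  finally have lower: "P/8 - P * c/16 \<le> a/8 * (\<bar>\<zeta> t\<bar> - c/4 * \<zeta> t)^2" .
  have "c * c \<le> c / 8" using mult_left_mono[OF c_le, of c] c_pos by simp
  moreover have "(1 + c/4)^2 = 1 + c/2 + c * c / 16" by (simp add: power2_eq_square algebra_simps)
  ultimately have "(1 + c/4)^2 \<le> 1 + c" using c_pos by linarith
  then have "P/8 * (1 + c/4)^2 \<le> P/8 * (1 + c)" using P by (intro mult_left_mono) auto
  moreover have "P/8 * (1 + c) = P/8 + P * c/8" by (simp add: algebra_simps)
  moreover have "a/8 * (\<bar>\<zeta> t\<bar> + c/4 * \<zeta> t)^2 = P/8 * (1 + c/4)^2"
    using zt by (simp add: P_def power2_eq_square algebra_simps)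
  ultimately have upper: "a/8 * (\<bar>\<zeta> t\<bar> + c/4 * \<zeta> t)^2 \<le> P/8 + P * c/8" by simp
  have "a * (1/8 - c/8) * \<zeta> t ^ 2 = P/8 - P * c/8" "a * (1/8 + c/2) * \<zeta> t ^ 2 = P/8 + P * c/2"
    by (simp_all add: P_def algebra_simps)
  moreover have "0 \<le> P * c" using P c_pos by simp
  ultimately show "a * (1/8 - c/8) * \<zeta> t ^ 2 \<le> \<zeta> (Suc t) - \<zeta> t"
    and "\<zeta> (Suc t) - \<zeta> t \<le> a * (1/8 + c/2) * \<zeta> t ^ 2"
    using incr noise lower upper by linarith+
qed

lemma pos_invariant:
  assumes pos: "0 < \<zeta> 0"
  shows "t \<le> t0 \<Longrightarrow> pos_shape t \<and> enveloped t"
proof (induction t)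
  case 0
  show ?case using pos enveloped_0 by (simp add: pos_shape_def)
next
  case (Suc t)
  then have "t \<le> t0" and shape: "pos_shape t" and env: "enveloped t" by auto
  note bounds = pos_shape_bounds[OF pos \<open>t \<le> t0\<close> shape]
  have zt: "0 < \<zeta> t"
    and lower: "inverse (\<zeta> 0) - (1/8 + c/2) * a * real t \<le> inverse (\<zeta> t)"
    and upper: "inverse (\<zeta> t) \<le> inverse (\<zeta> 0) - (1/8 - c) * a * real t"
    using shape by (auto simp: pos_shape_def)
  note incr = pos_increment_bounds[OF pos bounds(1) env bounds(3)]
  define D where "D = \<zeta> (Suc t) - \<zeta> t"
  have succ: "\<zeta> (Suc t) = \<zeta> t + D" by (simp add: D_def)
  note step = inverse_increment_pos[OF a_pos c_pos c_le zt bounds(2) incr[folded D_def]]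
  have shift:
    "inverse (\<zeta> 0) - x * a * real (Suc t) = inverse (\<zeta> 0) - x * a * real t - a * x" for x
    by (simp add: algebra_simps)
  have "0 \<le> a * (1/8 - c/8) * \<zeta> t ^ 2" using a_pos c_le by simp
  then have "0 < \<zeta> (Suc t)" using incr(1) zt by (simp add: D_def)
  moreover have "inverse (\<zeta> 0) - (1/8 + c/2) * a * real (Suc t) \<le> inverse (\<zeta> (Suc t))"
    "inverse (\<zeta> (Suc t)) \<le> inverse (\<zeta> 0) - (1/8 - c) * a * real (Suc t)"
    using lower upper step unfolding shift succ by linarith+
  ultimately have "pos_shape (Suc t)" by (simp add: pos_shape_def)
  moreover have "enveloped (Suc t)"
  proof (rule enveloped_Suc[OF env])
    show "envelope t \<le> \<bar>\<zeta> t\<bar> / 8"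
      using bounds(3) mult_right_mono[OF c_le less_imp_le[OF zt]] zt by argo
    have "a * (1/16) * \<zeta> t ^ 2 \<le> a * (1/8 - c/8) * \<zeta> t ^ 2"
      using a_pos c_le by (intro mult_right_mono mult_left_mono) auto
    moreover have "a * \<zeta> t ^ 2 / 16 = a * (1/16) * \<zeta> t ^ 2" by simp
    ultimately show "a * \<zeta> t ^ 2 / 16 \<le> \<zeta> (Suc t) - \<zeta> t" using incr(1) by linarith
  qed
  ultimately show ?case by simp
qed

definition neg_shape :: "nat \<Rightarrow> bool" where
  "neg_shape t \<longleftrightarrow> \<zeta> 0 \<le> \<zeta> t \<and> \<zeta> t < 0 \<and> inverse (- \<zeta> t) \<le> inverse (- \<zeta> 0) + a * real t / 3"

lemma neg_shape_bounds:
  assumes neg: "\<zeta> 0 < 0" and "t \<le> t0" and shape: "neg_shape t"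
  shows "- \<zeta> 0 \<le> 4 * (- \<zeta> t)" "a * (- \<zeta> t) \<le> 1/16" "envelope t \<le> - \<zeta> t / 8"
proof -
  define w where "w = - \<zeta> t"
  define z0 where "z0 = - \<zeta> 0"
  have z0: "0 < z0" "\<bar>\<zeta> 0\<bar> = z0" using neg by (simp_all add: z0_def)
  have w: "0 < w" "w \<le> z0" and inv_w: "inverse w \<le> inverse z0 + a * real t / 3"
    using shape by (auto simp: neg_shape_def w_def z0_def)
  have "z0 * inverse w \<le> z0 * (inverse z0 + a * real t / 3)"
    using inv_w z0 by (intro mult_left_mono) auto
  also have "\<dots> = 1 + a * z0 * real t / 3" using z0 by (simp add: algebra_simps)
  also have "\<dots> < 4" using horizon_le[OF \<open>t \<le> t0\<close>] ct_bounds(2) z0 by simp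
  finally have "z0 < 4 * w" using w by (simp add: field_simps)
  then show "- \<zeta> 0 \<le> 4 * (- \<zeta> t)" by (simp add: w_def z0_def)
  have "a * w \<le> a * z0" using w a_pos by simp
  moreover have "c * (8 - ct) \<le> 1/8 * 8" using c_pos c_le ct_pos ct_bounds(2) by (intro mult_mono) auto
  ultimately show "a * (- \<zeta> t) \<le> 1/16" using zeta0_small z0 by (simp add: w_def)
  have "c^2/nn * z0 \<le> c/32 * (4 * w)"
    using coupling_le coupling_pos \<open>z0 < 4 * w\<close> z0 c_pos by (intro mult_mono) auto
  then have "c^2/nn * z0 \<le> c * w / 8" by simp
  moreover have "c * z0 \<le> 1/8 * (4 * w)" using c_le c_pos \<open>z0 < 4 * w\<close> z0 by (intro mult_mono) auto
  moreover have "c * w \<le> 1/8 * w" using c_le w by (intro mult_right_mono) auto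
  moreover have "0 < c^2/nn * w" using coupling_pos w(1) by (rule mult_pos_pos)
  moreover have "envelope t = c * z0 / 8 + c^2/nn * z0 - c^2/nn * w + 3 * real t * E"
    using z0(2) by (simp add: envelope_def w_def z0_def right_diff_distrib)
  ultimately show "envelope t \<le> - \<zeta> t / 8"
    using accumulated_noise_le[OF \<open>t \<le> t0\<close>] w(1) unfolding z0(2) w_def[symmetric] by argo
qed

lemma neg_increment_bounds:
  assumes neg: "\<zeta> 0 < 0" and zt: "\<zeta> t < 0" and z0_le: "- \<zeta> 0 \<le> 4 * (- \<zeta> t)"
    and env: "enveloped t" "envelope t \<le> - \<zeta> t / 8"
  shows "a * \<zeta> t ^ 2 / 16 \<le> \<zeta> (Suc t) - \<zeta> t"
    and "\<zeta> (Suc t) - \<zeta> t \<le> a * \<zeta> t ^ 2 / 4"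
proof -
  define w where "w = - \<zeta> t"
  define P where "P = a * \<zeta> t ^ 2"
  have w: "0 < w" "\<bar>\<zeta> t\<bar> = w" using zt by (simp_all add: w_def)
  have "w / 8 \<le> \<bar>\<zeta> t\<bar>" using w by simp
  moreover have "\<bar>\<phi> i t\<bar> \<le> w / 8" if "i \<in> A" for i
    using env that by (auto simp: enveloped_def w_def)
  ultimately have incr:
    "a/8 * (\<bar>\<zeta> t\<bar> - w / 8)^2 - 3/2 * E \<le> \<zeta> (Suc t) - \<zeta> t"
    "\<zeta> (Suc t) - \<zeta> t \<le> a/8 * (\<bar>\<zeta> t\<bar> + w / 8)^2 + 3/2 * E"
    by (intro zeta_increment_bounds; blast)+
  have "a/8 * (\<bar>\<zeta> t\<bar> - w / 8)^2 = 49/512 * P" "a/8 * (\<bar>\<zeta> t\<bar> + w / 8)^2 = 81/512 * P"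
    unfolding w(2) by (simp_all add: P_def w_def power2_eq_square)
  moreover have "65536 * E \<le> a * (4 * w)^2 * c"
    using noise_le[of "4 * w"] z0_le neg by (simp add: w_def)
  moreover have "a * (4 * w)^2 * c \<le> a * (4 * w)^2 * (1/8)"
    using a_pos c_le by (intro mult_left_mono) auto
  moreover have "a * (4 * w)^2 * (1/8) = 2 * P" by (simp add: P_def w_def power2_eq_square)
  ultimately show "a * \<zeta> t ^ 2 / 16 \<le> \<zeta> (Suc t) - \<zeta> t"
    and "\<zeta> (Suc t) - \<zeta> t \<le> a * \<zeta> t ^ 2 / 4"
    using incr a_pos unfolding P_def[symmetric] by linarith+
qed

lemma neg_invariant:
  assumes neg: "\<zeta> 0 < 0"
  shows "t \<le> t0 \<Longrightarrow> neg_shape t \<and> enveloped t"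
proof (induction t)
  case 0
  show ?case using neg enveloped_0 by (simp add: neg_shape_def)
next
  case (Suc t)
  then have "t \<le> t0" and shape: "neg_shape t" and env: "enveloped t" by auto
  note bounds = neg_shape_bounds[OF neg \<open>t \<le> t0\<close> shape]
  have zt: "\<zeta> 0 \<le> \<zeta> t" "\<zeta> t < 0"
    and inv: "inverse (- \<zeta> t) \<le> inverse (- \<zeta> 0) + a * real t / 3"
    using shape by (auto simp: neg_shape_def)
  note incr = neg_increment_bounds[OF neg zt(2) bounds(1) env bounds(3)]
  define D where "D = \<zeta> (Suc t) - \<zeta> t"
  have succ: "- \<zeta> (Suc t) = - \<zeta> t - D" by (simp add: D_def)
  have "0 < - \<zeta> t" "a * (- \<zeta> t)^2 / 16 \<le> D" "D \<le> a * (- \<zeta> t)^2 / 4"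
    using zt incr by (simp_all add: D_def)
  note step = inverse_increment_neg[OF a_pos this(1) bounds(2) this(2,3)]
  have "inverse (- \<zeta> (Suc t)) \<le> inverse (- \<zeta> 0) + a * real (Suc t) / 3"
    using step(3) inv unfolding succ of_nat_Suc distrib_left mult_1_right by argo
  then have "neg_shape (Suc t)"
    using zt step(1,2) unfolding neg_shape_def succ by (simp add: D_def)
  moreover have "enveloped (Suc t)"
    using enveloped_Suc[OF env _ incr(1)] bounds(3) zt by simp
  ultimately show ?case by simp
qed

lemma zeta_pos_bounds:
  assumes pos: "0 < \<zeta> 0" and "t \<le> t0"
  shows "inverse (inverse (\<zeta> 0) - (1/8 - c) * a * real t) \<le> \<zeta> t"
    and "\<zeta> t \<le> inverse (inverse (\<zeta> 0) - (1/8 + c) * a * real t)"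
proof -
  have zt: "0 < \<zeta> t"
    and lower: "inverse (\<zeta> 0) - (1/8 + c/2) * a * real t \<le> inverse (\<zeta> t)"
    and upper: "inverse (\<zeta> t) \<le> inverse (\<zeta> 0) - (1/8 - c) * a * real t"
    using pos_invariant[OF pos \<open>t \<le> t0\<close>] by (auto simp: pos_shape_def)
  show "inverse (inverse (\<zeta> 0) - (1/8 - c) * a * real t) \<le> \<zeta> t"
    using le_imp_inverse_le[OF upper] zt by simp
  define Den where "Den = inverse (\<zeta> 0) - (1/8 + c) * a * real t"
  have "(1/8 + c) * (a * \<zeta> 0 * real t) \<le> (1/8 + c) * ct"
    using horizon_le[OF \<open>t \<le> t0\<close>] pos c_pos by (intro mult_left_mono) auto
  moreover have "\<zeta> 0 * Den = 1 - (1/8 + c) * (a * \<zeta> 0 * real t)"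
    using pos by (simp add: Den_def algebra_simps)
  ultimately have "0 < \<zeta> 0 * Den" using ct_bounds(1) by (simp add: algebra_simps)
  then have "0 < Den" using pos by (simp add: zero_less_mult_iff)
  moreover have "(1/8 + c/2) * a * real t \<le> (1/8 + c) * a * real t"
    using a_pos c_pos by (intro mult_right_mono) auto
  then have "Den \<le> inverse (\<zeta> t)" using lower by (simp add: Den_def)
  ultimately show "\<zeta> t \<le> inverse (inverse (\<zeta> 0) - (1/8 + c) * a * real t)"
    using le_imp_inverse_le zt unfolding Den_def by fastforce
qed

lemma zeta_neg_bounds:
  assumes "\<zeta> 0 < 0" "t \<le> t0"
  shows "\<zeta> 0 \<le> \<zeta> t" "\<zeta> t \<le> 0"
  using neg_invariant[OF assms] by (simp_all add: neg_shape_def)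

lemma enveloped_upto_horizon: "t \<le> t0 \<Longrightarrow> enveloped t"
  using pos_invariant neg_invariant zeta0_nonzero by (cases "0 < \<zeta> 0") auto

lemma phi_bound:
  assumes "t \<le> t0" "k \<in> A"
  shows "\<bar>\<phi> k t\<bar> \<le> 8 * (c^2/nn) * \<bar>\<zeta> t\<bar> + c/8 * \<bar>\<zeta> 0\<bar>"
proof -
  have "\<bar>\<phi> k t\<bar> \<le> envelope t"
    using enveloped_upto_horizon[OF assms(1)] assms(2) by (simp add: enveloped_def)
  moreover have "envelope t \<le> c/8 * \<bar>\<zeta> 0\<bar> + c^2/nn * (\<zeta> t - \<zeta> 0 + \<bar>\<zeta> 0\<bar> / 80)"
    using accumulated_noise_le[OF assms(1)] unfolding envelope_def distrib_left by simp
  moreover have drift: "\<zeta> t - \<zeta> 0 + \<bar>\<zeta> 0\<bar> / 80 \<le> 8 * \<bar>\<zeta> t\<bar>"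
  proof (cases "0 < \<zeta> 0")
    case True
    then show ?thesis
      using pos_shape_bounds(1)[OF True assms(1)] pos_invariant[OF True assms(1)] by simp
  next
    case False
    then have neg: "\<zeta> 0 < 0" using zeta0_nonzero by simp
    then show ?thesis
      using neg_shape_bounds(1)[OF neg assms(1)] neg_invariant[OF neg assms(1)]
      by (simp add: neg_shape_def)
  qed
  ultimately show ?thesis
    using mult_left_mono[OF drift less_imp_le[OF coupling_pos]] by simp
qed

end

lemma frakc_sq: "0 < \<tau> \<Longrightarrow> frakc \<tau> \<kappa> d ^ 2 = 64 * \<kappa>^2 * real d / \<tau>^2"
  by (simp add: frakc_def power_divide power_mult_distrib)

lemma frakc_noise_bound:
  fixes \<tau> \<kappa> \<eta> L z :: real and d n :: nat
  defines "c \<equiv> frakc \<tau> \<kappa> d"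
  assumes "0 < \<tau>" "0 < \<kappa>" "0 < \<eta>" "0 < L" "0 < d" "0 < n"
    and "sqrt (32 * L * real n / (c^2 * sqrt (real d))) \<le> \<bar>z\<bar>"
  shows "256 * real n * (\<eta> * \<tau> * \<kappa> * L) \<le> \<tau>^2 * \<eta> * z^2 * c^3"
proof -
  have c_tau: "c * \<tau> = 8 * \<kappa> * sqrt (real d)" using assms(2) by (simp add: c_def frakc_def)
  have c2_pos: "0 < c^2 * sqrt (real d)" using assms(2-6) by (simp add: c_def frakc_def)
  have "32 * L * real n / (c^2 * sqrt (real d)) \<le> z^2"
    using power_mono[OF assms(8), of 2] assms(5,7) c2_pos by simp
  then have "32 * L * real n \<le> z^2 * (c^2 * sqrt (real d))" using c2_pos by (simp add: pos_divide_le_eq)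
  then have "(8 * \<eta> * \<tau> * \<kappa>) * (32 * L * real n) \<le> (8 * \<eta> * \<tau> * \<kappa>) * (z^2 * (c^2 * sqrt (real d)))"
    using assms(2-4) by (intro mult_left_mono) auto
  also have "\<dots> = \<eta> * \<tau> * z^2 * c^2 * (8 * \<kappa> * sqrt (real d))" by (simp add: algebra_simps)
  also have "\<dots> = \<tau>^2 * \<eta> * z^2 * c^3"
    unfolding c_tau[symmetric] by (simp add: algebra_simps power2_eq_square power3_eq_cube)
  finally show ?thesis by (simp add: algebra_simps)
qed

theorem mainTheorem6:
  fixes \<tau> \<kappa> \<eta> L :: real and d n s :: nat
    and C :: "nat \<Rightarrow> nat set"
    and \<zeta> :: "nat \<Rightarrow> real" and \<phi> :: "nat \<Rightarrow> nat \<Rightarrow> real"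
    and ct C\<phi> :: real and t0 :: nat
  defines "c \<equiv> frakc \<tau> \<kappa> d"
  assumes pos: "\<tau> > 0" "\<kappa> > 0" "\<eta> > 0" "L > 0" "d > 0" "n > 0"
    and n4: "4 dvd n"
    and s: "s \<in> {1, 2}"
    and Cs: "C s \<subseteq> {1..n}" "card (C s) = n div 4"
    and upd_zeta: "\<And>t. \<zeta> (Suc t) - \<zeta> t \<in>
        {\<tau>^2 * \<eta> / (2 * real n) * (\<Sum>i\<in>C s. (\<zeta> t + \<phi> i t)^2) - 3/2 * \<eta> * \<tau> * \<kappa> * L ..
         \<tau>^2 * \<eta> / (2 * real n) * (\<Sum>i\<in>C s. (\<zeta> t + \<phi> i t)^2) + 3/2 * \<eta> * \<tau> * \<kappa> * L}"
    and upd_phi: "\<And>t k. k \<in> C s \<Longrightarrow> \<phi> k (Suc t) - \<phi> k t \<in>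
        {\<eta> * (\<kappa>^2 * real d / (4 * real n) * (\<bar>\<phi> k t\<bar> + \<bar>\<zeta> t\<bar>)^2 - 5/2 * \<kappa> * \<tau> * L) ..
         \<eta> * (3 * \<kappa>^2 * real d / (4 * real n) * (\<bar>\<phi> k t\<bar> + \<bar>\<zeta> t\<bar>)^2 + 5/2 * \<kappa> * \<tau> * L)}"
    and ct: "0 < ct" "ct < 8 / (1 + 8 * c)"
    and Cphi: "8 \<le> C\<phi>" "C\<phi> \<le> real n"
    and t0: "real t0 \<le> ct * inverse (\<tau>^2 * \<eta> * \<bar>\<zeta> 0\<bar>)"
    and cond1: "sqrt (32 * L * real n / (c^2 * sqrt (real d))) \<le> \<bar>\<zeta> 0\<bar>"
               "\<bar>\<zeta> 0\<bar> \<le> c * (8 - ct) / (16 * \<eta> * \<tau>^2)"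
    and cond2: "\<And>k. k \<in> C s \<Longrightarrow> \<bar>\<phi> k 0\<bar> \<le> c / 8 * \<bar>\<zeta> 0\<bar>"
    and cond3: "c \<le> Min {1/4 - 2 / C\<phi>, real n * C\<phi> / 4, (real n / 48) powr (1/3), 1/8}"
  shows "\<forall>t \<le> t0. \<forall>k \<in> C s.
           (\<zeta> 0 > 0 \<longrightarrow>
              inverse (inverse (\<zeta> 0) - (1/8 - c) * \<eta> * \<tau>^2 * real t) \<le> \<zeta> t \<and>
              \<zeta> t \<le> inverse (inverse (\<zeta> 0) - (1/8 + c) * \<eta> * \<tau>^2 * real t)) \<and>
           (\<zeta> 0 < 0 \<longrightarrow> \<zeta> 0 \<le> \<zeta> t \<and> \<zeta> t \<le> 0) \<and>
           \<bar>\<phi> k t\<bar> \<le> C\<phi> * c^2 / real n * \<bar>\<zeta> t\<bar> + c / 8 * \<bar>\<zeta> 0\<bar>"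
proof -
  define a where "a = \<tau>^2 * \<eta>"
  define E where "E = \<eta> * \<tau> * \<kappa> * L"
  have a_pos: "0 < a" and E_pos: "0 < E" using pos by (simp_all add: a_def E_def)
  have c_pos: "0 < c" using pos by (simp add: c_def frakc_def)
  have "Min {1/4 - 2 / C\<phi>, real n * C\<phi> / 4, (real n / 48) powr (1/3), 1/8} \<le> (1/8 :: real)"
    by (rule Min_le) auto
  then have c_le: "c \<le> 1/8" using cond3 by linarith
  obtain m where m: "n = 4 * m" using n4 by blast
  have nn_ge: "4 \<le> real n" and card: "real (card (C s)) = real n / 4" using m pos(6) Cs(2) by auto
  have noise: "256 * real n * E \<le> a * \<zeta> 0 ^ 2 * c^3"
    using frakc_noise_bound[OF pos cond1(1)[unfolded c_def]] by (simp add: a_def E_def c_def)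
  then have "\<zeta> 0 \<noteq> 0" using mult_pos_pos[OF E_pos, of "real n"] pos(6) by auto
  have horizon: "a * \<bar>\<zeta> 0\<bar> * real t0 \<le> ct" "a * \<bar>\<zeta> 0\<bar> \<le> c * (8 - ct) / 16" "ct * (1 + 8 * c) < 8"
    using t0 cond1(2) ct(2) a_pos c_pos \<open>\<zeta> 0 \<noteq> 0\<close> pos
    by (simp_all add: a_def field_simps)
  have coeff: "a * c^2 / (256 * real n) = \<eta> * (\<kappa>^2 * real d / (4 * real n))"
    using pos by (simp add: a_def c_def frakc_sq)
  interpret signal_noise_dynamics a E c "real n" ct t0 "C s" \<zeta> \<phi>
  proof
    show "\<zeta> (Suc t) - \<zeta> t \<in> {a / (2 * real n) * (\<Sum>i\<in>C s. (\<zeta> t + \<phi> i t)^2) - 3/2 * E ..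
         a / (2 * real n) * (\<Sum>i\<in>C s. (\<zeta> t + \<phi> i t)^2) + 3/2 * E}" for t
      using upd_zeta[of t] by (simp add: a_def E_def mult.assoc)
    show "\<phi> k (Suc t) - \<phi> k t \<in>
        {a * c^2 / (256 * real n) * (\<bar>\<phi> k t\<bar> + \<bar>\<zeta> t\<bar>)^2 - 5/2 * E ..
         3 * (a * c^2 / (256 * real n)) * (\<bar>\<phi> k t\<bar> + \<bar>\<zeta> t\<bar>)^2 + 5/2 * E}" if "k \<in> C s" for k t
      using upd_phi[OF that, of t] unfolding coeff by (simp add: E_def algebra_simps)
  qed (use a_pos E_pos c_pos c_le nn_ge card Cs(1) finite_subset noise \<open>\<zeta> 0 \<noteq> 0\<close> horizon ct cond2 in auto)
  show ?thesis
  proof (intro allI impI ballI conjI)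
    fix t k assume "t \<le> t0" "k \<in> C s"
    have a_eq: "x * \<eta> * \<tau>^2 * real t = x * a * real t" for x by (simp add: a_def)
    show "inverse (inverse (\<zeta> 0) - (1/8 - c) * \<eta> * \<tau>^2 * real t) \<le> \<zeta> t"
      and "\<zeta> t \<le> inverse (inverse (\<zeta> 0) - (1/8 + c) * \<eta> * \<tau>^2 * real t)" if "0 < \<zeta> 0"
      using zeta_pos_bounds[OF that \<open>t \<le> t0\<close>] unfolding a_eq by simp_all
    show "\<zeta> 0 \<le> \<zeta> t" "\<zeta> t \<le> 0" if "\<zeta> 0 < 0"
      using zeta_neg_bounds[OF that \<open>t \<le> t0\<close>] by simp_all
    have "8 * (c^2 / real n) * \<bar>\<zeta> t\<bar> \<le> C\<phi> * (c^2 / real n) * \<bar>\<zeta> t\<bar>"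
      using Cphi(1) coupling_pos by (intro mult_right_mono) auto
    then show "\<bar>\<phi> k t\<bar> \<le> C\<phi> * c^2 / real n * \<bar>\<zeta> t\<bar> + c / 8 * \<bar>\<zeta> 0\<bar>"
      using phi_bound[OF \<open>t \<le> t0\<close> \<open>k \<in> C s\<close>] by simp
  qed
qed

end
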